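(* Let $\gamma>0$, $p\geq1$, and $B\geq A$ be real numbers. Let $(a,b)\subseteq\mathbb{R}$ be an interval, and let $v:\mathcal{D}\cap(a,b)\to[A,B]$ be a function. Assume there exist two integers $\alpha,\beta$ with $a<\alpha<\beta<b$ such that $v(\alpha)=A$ and $v(\beta)=B$. Then for every $\delta\in[1/2,1]$ and every real number $\lambda\geq2^{1+\gamma/p}(B-A)$, $$DF_{\gamma,p,\lambda}(\delta,v,(a,b))\geq\frac{1}{2^{\gamma+1}-1}\cdot\frac{1}{\lambda^p\delta^{p+\gamma}}\cdot\frac{(B-A)^p}{(\beta-\alpha)^{p-1}}.$$
   Context: Let $\psi_{\gamma,p,\lambda}(\delta,\Delta)=1$ if $\Delta>\lambda\delta^{1+\gamma/p}$ and $0$ otherwise, for $(\delta,\Delta)\in[0,\infty)^2$. Let $\mathcal{D}=\{i/2^k:i\in\mathbb{Z},k\in\mathbb{N}\}$ be the dyadic numbers. For an interval $(a,b)$ and integer $k\geq0$, let $\mathcal{D}_k(a,b)=\{i\in\mathbb{Z}:[i/2^k,(i+1)/2^k]\subseteq(a,b)\}$. For $\delta>0$ and $v:\mathcal{D}\cap(a,b)\to\mathbb{R}$, the dyadic functional is $$DF_{\gamma,p,\lambda}(\delta,v,(a,b))=\sum_{k=0}^\infty\frac{1}{2^{k(\gamma+1)}}\sum_{i\in\mathcal{D}_k(a,b)}\psi_{\gamma,p,\lambda}\!\left(\frac{\delta}{2^k},\left|v\!\left(\tfrac{i+1}{2^k}\right)-v\!\left(\tfrac{i}{2^k}\right)\right|\right).$$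 *)

theory Defs
  imports "HOL-Analysis.Analysis"
begin

definition psi :: "real \<Rightarrow> real \<Rightarrow> real \<Rightarrow> real \<Rightarrow> real \<Rightarrow> real" where
  "psi \<gamma> p lam \<delta> \<Delta> = (if \<Delta> > lam * \<delta> powr (1 + \<gamma> / p) then 1 else 0)"

definition dyadics :: "real set" where
  "dyadics = {of_int i / 2 ^ k | (i::int) (k::nat). True}"

text \<open>Interval endpoints are extended reals, so unbounded intervals are allowed.\<close>
definition Dk :: "nat \<Rightarrow> ereal \<Rightarrow> ereal \<Rightarrow> int set" where
  "Dk k a b = {i::int. a < ereal (of_int i / 2 ^ k) \<and> ereal (of_int (i + 1) / 2 ^ k) < b}"

definition DF :: "real \<Rightarrow> real \<Rightarrow> real \<Rightarrow> real \<Rightarrow> (real \<Rightarrow> real) \<Rightarrow> ereal \<Rightarrow> ereal \<Rightarrow> ennreal" where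
  "DF \<gamma> p lam \<delta> v a b =
     (\<Sum>k. ennreal (1 / 2 powr (real k * (\<gamma> + 1))) *
        (\<Sum>\<^sub>\<infinity> i \<in> Dk k a b.
           ennreal (psi \<gamma> p lam (\<delta> / 2 ^ k)
             \<bar>v (of_int (i + 1) / 2 ^ k) - v (of_int i / 2 ^ k)\<bar>)))"

end

theory Submission
  imports Defs
begin

text \<open>
  Put \<rho> = 2 powr (1 + \<gamma>/p), c = \<lambda> \<delta> powr (1 + \<gamma>/p), Q = 2 powr (\<gamma> + 1), and normalise
  the increment of v on the dyadic interval [j/2^k, (j+1)/2^k] as
  x_k(j) = |v((j+1)/2^k) - v(j/2^k)| \<rho>^k / c. The k-th term of the functional is then
  Q^-k times the number of j with x_k(j) > 1, and the triangle inequality gives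
  \<rho> x_k(j) \<le> x_(k+1)(2j) + x_(k+1)(2j+1).
  For the potential \<Phi>(x) = Q if x > 1 and \<Phi>(x) = x^p otherwise (capped_powr), convexity of t^p and
  \<rho>^p = Q 2^(p-1) give Q \<Phi>(x) \<le> Q (Q - 1) [x > 1] + \<Phi>(y) + \<Phi>(z) for a node x with
  children y, z. Iterating this down r levels of the dyadic tree below a unit interval
  [u, u+1] shows that Q - 1 times the weighted count dominates \<Phi>(x_0(u)) - (2/Q)^r, and
  (2/Q)^r vanishes because \<gamma> > 0. The hypothesis on \<lambda> makes x_0(u) \<le> 1, so
  \<Phi>(x_0(u)) = x_0(u)^p, and Jensen's inequality over the \<beta> - \<alpha> unit intervals, whose
  increments add up to at least B - A, yields the bound.
\<close>

lemma convex_on_powr_nonneg: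
  fixes p :: real
  assumes "1 \<le> p"
  shows "convex_on {0..} (\<lambda>x. x powr p)"
proof (rule convex_onI)
  fix t x y :: real
  assume t: "0 < t" "t < 1" and xy: "x \<in> {0..}" "y \<in> {0..}"
  have scaled: "(s * z) powr p \<le> s * z powr p" if "0 < s" "s \<le> 1" "0 \<le> z" for s z :: real
    using powr_le_one_le[OF that(1,2) assms] that by (simp add: powr_mult mult_right_mono)
  show "((1 - t) *\<^sub>R x + t *\<^sub>R y) powr p \<le> (1 - t) * x powr p + t * y powr p"
  proof (cases "x = 0 \<or> y = 0")
    case True
    then show ?thesis
      using scaled[of t y] scaled[of "1 - t" x] t xy by auto
  next
    case False
    then show ?thesis
      using convex_onD[OF powr_convex[OF assms], of t x y] t xy by auto
  qed
qed simp

lemma powr_midpoint_le: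
  fixes p y z :: real
  assumes "1 \<le> p" "0 \<le> y" "0 \<le> z"
  shows "2 * ((y + z) / 2) powr p \<le> y powr p + z powr p"
  using convex_onD[OF convex_on_powr_nonneg[OF assms(1)], of "1/2" y z] assms
  by (simp add: field_simps)

lemma powr_sum_le_card_powr_sum:
  fixes y :: "'a \<Rightarrow> real"
  assumes "finite S" "S \<noteq> {}" "1 \<le> p" "\<And>u. u \<in> S \<Longrightarrow> 0 \<le> y u"
  shows "(\<Sum>u\<in>S. y u) powr p \<le> card S powr (p - 1) * (\<Sum>u\<in>S. y u powr p)"
proof -
  define n where "n = real (card S)"
  have n: "0 < n"
    using assms(1,2) by (simp add: n_def card_gt_0_iff)
  have "((\<Sum>u\<in>S. y u) / n) powr p = (\<Sum>u\<in>S. (1 / n) *\<^sub>R y u) powr p"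
    by (simp add: sum_divide_distrib)
  also have "\<dots> \<le> (\<Sum>u\<in>S. (1 / n) * y u powr p)"
    using convex_on_sum[OF assms(1,2) convex_on_powr_nonneg[OF assms(3)], of "\<lambda>_. 1 / n" y]
      n assms(4) by (simp add: n_def)
  finally have "(\<Sum>u\<in>S. y u) powr p / n powr p \<le> (\<Sum>u\<in>S. y u powr p) / n"
    using n assms(4) by (simp add: powr_divide sum_nonneg flip: sum_distrib_left sum_divide_distrib)
  moreover have "n powr p = n * n powr (p - 1)"
    using n by (simp add: powr_diff)
  ultimately show ?thesis
    using n by (simp add: n_def field_simps)
qed

lemma sum_int_interval_telescope:
  fixes g :: "int \<Rightarrow> 'a::ab_group_add"
  assumes "a \<le> b"
  shows "(\<Sum>u\<in>{a..<b}. g (u + 1) - g u) = g b - g a"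
  using assms
proof (induction b rule: int_ge_induct)
  case (step b)
  have "{a..<b + 1} = insert b {a..<b}"
    using step.hyps by auto
  then show ?case
    using step by simp
qed simp

lemma increment_powr_le_sum_powr:
  fixes v :: "int \<Rightarrow> real" and \<alpha> \<beta> :: int
  assumes "\<alpha> < \<beta>" "1 \<le> p"
  shows "\<bar>v \<beta> - v \<alpha>\<bar> powr p / of_int (\<beta> - \<alpha>) powr (p - 1)
    \<le> (\<Sum>u\<in>{\<alpha>..<\<beta>}. \<bar>v (u + 1) - v u\<bar> powr p)"
proof -
  have "\<bar>v \<beta> - v \<alpha>\<bar> \<le> (\<Sum>u\<in>{\<alpha>..<\<beta>}. \<bar>v (u + 1) - v u\<bar>)"
    using sum_int_interval_telescope[of \<alpha> \<beta> v] sum_abs[of "\<lambda>u. v (u + 1) - v u" "{\<alpha>..<\<beta>}"]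
      assms(1) by simp
  then have "\<bar>v \<beta> - v \<alpha>\<bar> powr p \<le> (\<Sum>u\<in>{\<alpha>..<\<beta>}. \<bar>v (u + 1) - v u\<bar>) powr p"
    using assms(2) by (intro powr_mono2) auto
  also have "\<dots> \<le> of_int (\<beta> - \<alpha>) powr (p - 1) * (\<Sum>u\<in>{\<alpha>..<\<beta>}. \<bar>v (u + 1) - v u\<bar> powr p)"
    using powr_sum_le_card_powr_sum[of "{\<alpha>..<\<beta>}" p] assms by simp
  finally show ?thesis
    using assms(1) by (simp add: field_simps)
qed

definition capped_powr :: "real \<Rightarrow> real \<Rightarrow> real \<Rightarrow> real" where
  "capped_powr Q p x = (if 1 < x then Q else x powr p)"

lemma capped_powr_nonneg: "0 \<le> Q \<Longrightarrow> 0 \<le> capped_powr Q p x"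
  by (simp add: capped_powr_def)

lemma capped_powr_sum_ge:
  "0 \<le> Q \<Longrightarrow> 1 < y \<or> 1 < z \<Longrightarrow> Q \<le> capped_powr Q p y + capped_powr Q p z"
  using capped_powr_nonneg[of Q p y] capped_powr_nonneg[of Q p z]
  by (auto simp: capped_powr_def)

lemma capped_powr_split:
  fixes Q p \<rho> x y z :: real
  assumes \<rho>: "2 \<le> \<rho>" "Q * 2 powr (p - 1) \<le> \<rho> powr p"
    and Q: "1 < Q" and p: "1 \<le> p"
    and xyz: "0 \<le> x" "0 \<le> y" "0 \<le> z" "\<rho> * x \<le> y + z"
  shows "Q * capped_powr Q p x
    \<le> Q * (Q - 1) * (if 1 < x then 1 else 0) + capped_powr Q p y + capped_powr Q p z"
proof (cases "1 < x")
  case True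
  then have "1 < y \<or> 1 < z"
    using \<rho>(1) xyz(4) mult_strict_left_mono[OF True, of \<rho>] by linarith
  then have "Q \<le> capped_powr Q p y + capped_powr Q p z"
    using Q by (intro capped_powr_sum_ge) auto
  then show ?thesis
    using True by (simp add: capped_powr_def algebra_simps)
next
  case False
  have "Q * x powr p \<le> capped_powr Q p y + capped_powr Q p z"
  proof (cases "1 < y \<or> 1 < z")
    case True
    have "Q * x powr p \<le> Q"
      using False xyz(1) Q p powr_le1[of p x] by simp
    then show ?thesis
      using capped_powr_sum_ge[of Q y z p] True Q by linarith
  next
    case False
    have "Q * x powr p = 2 * (Q * 2 powr (p - 1) * x powr p / 2 powr p)"
      by (simp add: powr_diff)
    also have "\<dots> \<le> 2 * (\<rho> powr p * x powr p / 2 powr p)"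
      using \<rho>(2) by (intro mult_left_mono divide_right_mono mult_right_mono) auto
    also have "\<dots> = 2 * (\<rho> * x / 2) powr p"
      using \<rho>(1) xyz(1) by (simp add: powr_mult powr_divide)
    also have "\<dots> \<le> 2 * ((y + z) / 2) powr p"
      using \<rho>(1) xyz p by (intro mult_left_mono powr_mono2) auto
    also have "\<dots> \<le> y powr p + z powr p"
      by (rule powr_midpoint_le[OF p xyz(2,3)])
    finally show ?thesis
      using False by (simp add: capped_powr_def)
  qed
  then show ?thesis
    using False by (simp add: capped_powr_def)
qed

text \<open>Integer i at level m stands for the dyadic interval [i/2^m, (i+1)/2^m]; its descendants
  k levels further down are the integers in dyadic_block k i.\<close>

definition dyadic_block :: "nat \<Rightarrow> int \<Rightarrow> int set" where
  "dyadic_block k i = {i * 2 ^ k ..< (i + 1) * 2 ^ k}"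

lemma finite_dyadic_block [simp]: "finite (dyadic_block k i)"
  by (simp add: dyadic_block_def)

lemma dyadic_block_0 [simp]: "dyadic_block 0 i = {i}"
  by (auto simp: dyadic_block_def)

lemma dyadic_block_Suc:
  "dyadic_block (Suc k) i = dyadic_block k (2 * i) \<union> dyadic_block k (2 * i + 1)"
  "dyadic_block k (2 * i) \<inter> dyadic_block k (2 * i + 1) = {}"
  by (auto simp: dyadic_block_def algebra_simps)

lemma sum_dyadic_blocks:
  fixes g :: "int \<Rightarrow> 'a::comm_monoid_add"
  assumes "a \<le> b"
  shows "(\<Sum>u\<in>{a..<b}. \<Sum>j\<in>dyadic_block k u. g j) = (\<Sum>j\<in>{a * 2 ^ k..<b * 2 ^ k}. g j)"
  using assms
proof (induction b rule: int_ge_induct)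
  case (step b)
  have "a * 2 ^ k \<le> b * 2 ^ k" "b * 2 ^ k \<le> (b + 1) * (2 ^ k :: int)"
    using step.hyps by simp_all
  then have "{a * 2 ^ k..<(b + 1) * 2 ^ k} = {a * 2 ^ k..<b * 2 ^ k} \<union> dyadic_block k b"
    unfolding dyadic_block_def by (rule ivl_disj_un_two(3)[symmetric])
  moreover have "{a..<b + 1} = insert b {a..<b}"
    using step.hyps by auto
  ultimately show ?case
    using step.IH by (simp add: sum.union_disjoint dyadic_block_def add.commute)
qed simp

definition exceedance_count :: "real \<Rightarrow> (nat \<Rightarrow> int \<Rightarrow> real) \<Rightarrow> nat \<Rightarrow> nat \<Rightarrow> int \<Rightarrow> real" where
  "exceedance_count Q x r m i =
     (\<Sum>k\<le>r. (\<Sum>j\<in>dyadic_block k i. if 1 < x (m + k) j then 1 else 0) / Q ^ k)"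

lemma exceedance_count_Suc:
  "exceedance_count Q x (Suc r) m i = (if 1 < x m i then 1 else 0)
     + (exceedance_count Q x r (Suc m) (2 * i) + exceedance_count Q x r (Suc m) (2 * i + 1)) / Q"
  unfolding exceedance_count_def sum.atMost_Suc_shift
  by (simp add: dyadic_block_Suc sum.union_disjoint add_divide_distrib sum.distrib
      sum_divide_distrib power_Suc2 del: power_Suc)

lemma exceedance_count_ge:
  fixes Q p \<rho> :: real and x :: "nat \<Rightarrow> int \<Rightarrow> real"
  assumes \<rho>: "2 \<le> \<rho>" "Q * 2 powr (p - 1) \<le> \<rho> powr p"
    and Q: "1 < Q" and p: "1 \<le> p"
    and x: "\<And>m i. 0 \<le> x m i" "\<And>m i. \<rho> * x m i \<le> x (Suc m) (2 * i) + x (Suc m) (2 * i + 1)"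
  shows "capped_powr Q p (x m i) - (2 / Q) ^ r \<le> (Q - 1) * exceedance_count Q x r m i"
proof (induction r arbitrary: m i)
  case 0
  have "x m i powr p \<le> 1" if "\<not> 1 < x m i"
    using that x(1)[of m i] p powr_le1[of p "x m i"] by simp
  then show ?case
    by (simp add: exceedance_count_def capped_powr_def)
next
  case (Suc r)
  let ?L = "x (Suc m) (2 * i)" and ?R = "x (Suc m) (2 * i + 1)"
  have "Q * capped_powr Q p (x m i) - 2 * (2 / Q) ^ r
    \<le> Q * (Q - 1) * (if 1 < x m i then 1 else 0)
       + (capped_powr Q p ?L - (2 / Q) ^ r) + (capped_powr Q p ?R - (2 / Q) ^ r)"
    using capped_powr_split[OF \<rho> Q p x(1)[of m i] x(1)[of "Suc m" "2 * i"]
        x(1)[of "Suc m" "2 * i + 1"] x(2)[of m i]] by linarith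
  also have "\<dots> \<le> Q * (Q - 1) * (if 1 < x m i then 1 else 0)
       + (Q - 1) * exceedance_count Q x r (Suc m) (2 * i)
       + (Q - 1) * exceedance_count Q x r (Suc m) (2 * i + 1)"
    using Suc.IH[of "Suc m" "2 * i"] Suc.IH[of "Suc m" "2 * i + 1"] by linarith
  also have "\<dots> = Q * ((Q - 1) * exceedance_count Q x (Suc r) m i)"
    using Q by (simp add: exceedance_count_Suc field_simps)
  finally show ?case
    using Q by (simp add: field_simps)
qed

lemma exceedances_on_interval_ge:
  fixes Q p \<rho> :: real and x :: "nat \<Rightarrow> int \<Rightarrow> real" and \<alpha> \<beta> :: int
  assumes \<rho>: "2 \<le> \<rho>" "Q * 2 powr (p - 1) \<le> \<rho> powr p"
    and Q: "1 < Q" and p: "1 \<le> p"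
    and x: "\<And>m i. 0 \<le> x m i" "\<And>m i. \<rho> * x m i \<le> x (Suc m) (2 * i) + x (Suc m) (2 * i + 1)"
    and \<alpha>\<beta>: "\<alpha> \<le> \<beta>"
  shows "(\<Sum>u\<in>{\<alpha>..<\<beta>}. capped_powr Q p (x 0 u)) - (\<beta> - \<alpha>) * (2 / Q) ^ r
    \<le> (Q - 1) * (\<Sum>k\<le>r. (\<Sum>j\<in>{\<alpha> * 2 ^ k..<\<beta> * 2 ^ k}. if 1 < x k j then 1 else 0) / Q ^ k)"
proof -
  have counts: "(\<Sum>u\<in>{\<alpha>..<\<beta>}. exceedance_count Q x r 0 u)
      = (\<Sum>k\<le>r. (\<Sum>j\<in>{\<alpha> * 2 ^ k..<\<beta> * 2 ^ k}. if 1 < x k j then 1 else 0) / Q ^ k)"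
    unfolding exceedance_count_def
    by (subst sum.swap) (simp add: sum_dyadic_blocks[OF \<alpha>\<beta>] flip: sum_divide_distrib)
  have "(\<Sum>u\<in>{\<alpha>..<\<beta>}. capped_powr Q p (x 0 u)) - (\<beta> - \<alpha>) * (2 / Q) ^ r
      = (\<Sum>u\<in>{\<alpha>..<\<beta>}. capped_powr Q p (x 0 u) - (2 / Q) ^ r)"
    using \<alpha>\<beta> by (simp add: sum_subtractf)
  also have "\<dots> \<le> (\<Sum>u\<in>{\<alpha>..<\<beta>}. (Q - 1) * exceedance_count Q x r 0 u)"
    by (intro sum_mono exceedance_count_ge[of \<rho> Q p x, OF \<rho> Q p x])
  also have "\<dots> = (Q - 1) * (\<Sum>k\<le>r. (\<Sum>j\<in>{\<alpha> * 2 ^ k..<\<beta> * 2 ^ k}. if 1 < x k j then 1 else 0) / Q ^ k)"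
    by (simp add: counts flip: sum_distrib_left)
  finally show ?thesis .
qed

lemma ennreal_le_suminf_if_partial_sums_ge:
  fixes f e :: "nat \<Rightarrow> real"
  assumes "\<And>k. 0 \<le> f k" "e \<longlonglongrightarrow> 0" "\<And>r. a - e r \<le> (\<Sum>k\<le>r. f k)"
  shows "ennreal a \<le> (\<Sum>k. ennreal (f k))"
proof (rule LIMSEQ_le_const2)
  show "(\<lambda>r. ennreal (a - e r)) \<longlonglongrightarrow> ennreal a"
    using tendsto_diff[OF tendsto_const assms(2), of a] by (intro tendsto_ennrealI) simp
  show "\<exists>N. \<forall>r\<ge>N. ennreal (a - e r) \<le> (\<Sum>k. ennreal (f k))"
  proof (intro exI allI impI)
    fix r
    have "ennreal (a - e r) \<le> (\<Sum>k\<le>r. ennreal (f k))"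
      using assms(1,3) by (simp add: ennreal_leI)
    also have "\<dots> \<le> (\<Sum>k. ennreal (f k))"
      by (rule sum_le_suminf) auto
    finally show "ennreal (a - e r) \<le> (\<Sum>k. ennreal (f k))" .
  qed
qed

definition normalised_increment :: "(real \<Rightarrow> real) \<Rightarrow> real \<Rightarrow> real \<Rightarrow> nat \<Rightarrow> int \<Rightarrow> real" where
  "normalised_increment v \<rho> c k j = \<bar>v (of_int (j + 1) / 2 ^ k) - v (of_int j / 2 ^ k)\<bar> * \<rho> ^ k / c"

lemma normalised_increment_nonneg:
  "0 < c \<Longrightarrow> 0 \<le> \<rho> \<Longrightarrow> 0 \<le> normalised_increment v \<rho> c k j"
  by (simp add: normalised_increment_def)

lemma normalised_increment_gt_1_iff:
  "0 < c \<Longrightarrow> 0 < \<rho> \<Longrightarrow> 1 < normalised_increment v \<rho> c k j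
    \<longleftrightarrow> c / \<rho> ^ k < \<bar>v (of_int (j + 1) / 2 ^ k) - v (of_int j / 2 ^ k)\<bar>"
  by (simp add: normalised_increment_def field_simps)

lemma normalised_increment_split:
  assumes "0 < c" "0 \<le> \<rho>"
  shows "\<rho> * normalised_increment v \<rho> c k j
    \<le> normalised_increment v \<rho> c (Suc k) (2 * j) + normalised_increment v \<rho> c (Suc k) (2 * j + 1)"
proof -
  have "of_int (2 * j + 1 + 1) / 2 ^ Suc k = of_int (j + 1) / (2 ^ k :: real)"
    by (simp add: field_simps)
  then have "\<bar>v (of_int (j + 1) / 2 ^ k) - v (of_int j / 2 ^ k)\<bar>
      \<le> \<bar>v (of_int (2 * j + 1) / 2 ^ Suc k) - v (of_int (2 * j) / 2 ^ Suc k)\<bar>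
        + \<bar>v (of_int (2 * j + 1 + 1) / 2 ^ Suc k) - v (of_int (2 * j + 1) / 2 ^ Suc k)\<bar>"
    by simp
  from mult_left_mono[OF this, of "\<rho> ^ Suc k / c"] show ?thesis
    using assms by (simp add: normalised_increment_def field_simps)
qed

lemma sum_capped_normalised_increments_ge:
  fixes v :: "real \<Rightarrow> real" and \<alpha> \<beta> :: int
  assumes p: "1 \<le> p" and c: "0 < c" and \<alpha>\<beta>: "\<alpha> < \<beta>"
    and increments: "\<And>u::int. \<alpha> \<le> u \<Longrightarrow> u < \<beta> \<Longrightarrow> \<bar>v (of_int (u + 1)) - v (of_int u)\<bar> \<le> c"
  shows "\<bar>v \<beta> - v \<alpha>\<bar> powr p / (c powr p * of_int (\<beta> - \<alpha>) powr (p - 1))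
    \<le> (\<Sum>u\<in>{\<alpha>..<\<beta>}. capped_powr Q p (normalised_increment v \<rho> c 0 u))"
proof -
  have "\<bar>v \<beta> - v \<alpha>\<bar> powr p / (c powr p * of_int (\<beta> - \<alpha>) powr (p - 1))
      = \<bar>v \<beta> - v \<alpha>\<bar> powr p / of_int (\<beta> - \<alpha>) powr (p - 1) / c powr p"
    by (simp add: mult.commute)
  also have "\<dots> \<le> (\<Sum>u\<in>{\<alpha>..<\<beta>}. \<bar>v (of_int (u + 1)) - v u\<bar> powr p) / c powr p"
    using increment_powr_le_sum_powr[OF \<alpha>\<beta> p, of "\<lambda>u. v (of_int u)"]
    by (rule divide_right_mono) simp
  also have "\<dots> = (\<Sum>u\<in>{\<alpha>..<\<beta>}. capped_powr Q p (normalised_increment v \<rho> c 0 u))"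
    unfolding sum_divide_distrib
  proof (intro sum.cong refl)
    fix u assume "u \<in> {\<alpha>..<\<beta>}"
    then have "normalised_increment v \<rho> c 0 u \<le> 1"
      using increments c by (simp add: normalised_increment_def add.commute)
    then show "\<bar>v (of_int (u + 1)) - v u\<bar> powr p / c powr p
        = capped_powr Q p (normalised_increment v \<rho> c 0 u)"
      using c by (simp add: capped_powr_def normalised_increment_def powr_divide add.commute)
  qed
  finally show ?thesis .
qed

lemma increment_exceedances_ge:
  fixes v :: "real \<Rightarrow> real" and \<alpha> \<beta> :: int and Q p \<rho> c :: real
  assumes Q: "2 < Q" and \<rho>: "2 \<le> \<rho>" "Q * 2 powr (p - 1) \<le> \<rho> powr p"
    and p: "1 \<le> p" and c: "0 < c" and \<alpha>\<beta>: "\<alpha> < \<beta>"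
    and increments: "\<And>u::int. \<alpha> \<le> u \<Longrightarrow> u < \<beta> \<Longrightarrow> \<bar>v (of_int (u + 1)) - v (of_int u)\<bar> \<le> c"
  shows "ennreal (\<bar>v \<beta> - v \<alpha>\<bar> powr p / ((Q - 1) * c powr p * of_int (\<beta> - \<alpha>) powr (p - 1)))
    \<le> (\<Sum>k. ennreal ((\<Sum>j\<in>{\<alpha> * 2 ^ k..<\<beta> * 2 ^ k}.
          if c / \<rho> ^ k < \<bar>v (of_int (j + 1) / 2 ^ k) - v (of_int j / 2 ^ k)\<bar> then 1 else 0) / Q ^ k))"
proof -
  let ?x = "normalised_increment v \<rho> c"
  define bound where
    "bound = \<bar>v \<beta> - v \<alpha>\<bar> powr p / (c powr p * of_int (\<beta> - \<alpha>) powr (p - 1))"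
  have partial: "bound / (Q - 1) - of_int (\<beta> - \<alpha>) * (2 / Q) ^ r / (Q - 1)
      \<le> (\<Sum>k\<le>r. (\<Sum>j\<in>{\<alpha> * 2 ^ k..<\<beta> * 2 ^ k}. if 1 < ?x k j then 1 else 0) / Q ^ k)" for r
  proof -
    have "bound - of_int (\<beta> - \<alpha>) * (2 / Q) ^ r
        \<le> (Q - 1) * (\<Sum>k\<le>r. (\<Sum>j\<in>{\<alpha> * 2 ^ k..<\<beta> * 2 ^ k}. if 1 < ?x k j then 1 else 0) / Q ^ k)"
      using sum_capped_normalised_increments_ge[OF p c \<alpha>\<beta> increments, of Q \<rho>] Q \<rho> \<alpha>\<beta> c
        exceedances_on_interval_ge[of \<rho> Q p ?x \<alpha> \<beta> r, OF \<rho> _ p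
          normalised_increment_nonneg normalised_increment_split]
      unfolding bound_def by simp
    moreover have "0 < Q - 1"
      using Q by simp
    ultimately show ?thesis
      by (simp add: pos_divide_le_eq mult.commute flip: diff_divide_distrib)
  qed
  have error_vanishes: "(\<lambda>r. of_int (\<beta> - \<alpha>) * (2 / Q) ^ r / (Q - 1)) \<longlonglongrightarrow> 0"
    using Q by (intro tendsto_eq_intros LIMSEQ_power_zero) auto
  have "ennreal (bound / (Q - 1))
    \<le> (\<Sum>k. ennreal ((\<Sum>j\<in>{\<alpha> * 2 ^ k..<\<beta> * 2 ^ k}. if 1 < ?x k j then 1 else 0) / Q ^ k))"
    using Q by (intro ennreal_le_suminf_if_partial_sums_ge[OF _ error_vanishes partial])
      (simp add: sum_nonneg)
  then show ?thesis
    using c \<rho> by (simp add: bound_def normalised_increment_gt_1_iff mult_ac)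
qed

lemma of_int_in_dyadics: "real_of_int u \<in> dyadics"
  unfolding dyadics_def by (intro CollectI exI[of _ u] exI[of _ 0]) simp

lemma dyadic_interval_subset_Dk:
  fixes \<alpha> \<beta> :: int
  assumes "a < ereal (of_int \<alpha>)" "ereal (of_int \<beta>) < b"
  shows "{\<alpha> * 2 ^ k..<\<beta> * 2 ^ k} \<subseteq> Dk k a b"
proof
  fix i assume "i \<in> {\<alpha> * 2 ^ k..<\<beta> * 2 ^ k}"
  then have "real_of_int (\<alpha> * 2 ^ k) \<le> of_int i" "real_of_int (i + 1) \<le> of_int (\<beta> * 2 ^ k)"
    by (simp_all only: of_int_le_iff) auto
  then have "ereal (of_int \<alpha>) \<le> ereal (of_int i / 2 ^ k)"
    "ereal (of_int (i + 1) / 2 ^ k) \<le> ereal (of_int \<beta>)"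
    by (simp_all add: field_simps)
  then show "i \<in> Dk k a b"
    using less_le_trans[OF assms(1)] le_less_trans[OF _ assms(2)] by (simp add: Dk_def)
qed

lemma DF_ge_sum_over_finite_subsets:
  assumes "\<And>k. finite (S k)" "\<And>k. S k \<subseteq> Dk k a b"
  shows "(\<Sum>k. ennreal ((\<Sum>i\<in>S k. psi \<gamma> p lam (\<delta> / 2 ^ k)
              \<bar>v (of_int (i + 1) / 2 ^ k) - v (of_int i / 2 ^ k)\<bar>) / 2 powr (real k * (\<gamma> + 1))))
    \<le> DF \<gamma> p lam \<delta> v a b"
  unfolding DF_def
proof (intro suminf_le summableI)
  fix k
  define g where "g i = psi \<gamma> p lam (\<delta> / 2 ^ k) \<bar>v (of_int (i + 1) / 2 ^ k) - v (of_int i / 2 ^ k)\<bar>"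
    for i :: int
  have g_nonneg: "0 \<le> g i" for i
    by (simp add: g_def psi_def)
  have "ennreal ((\<Sum>i\<in>S k. g i) / 2 powr (real k * (\<gamma> + 1)))
      = ennreal (1 / 2 powr (real k * (\<gamma> + 1))) * (\<Sum>\<^sub>\<infinity>i\<in>S k. ennreal (g i))"
    using assms(1) g_nonneg by (simp add: sum_nonneg flip: ennreal_mult'')
  also have "\<dots> \<le> ennreal (1 / 2 powr (real k * (\<gamma> + 1))) * (\<Sum>\<^sub>\<infinity>i\<in>Dk k a b. ennreal (g i))"
    using assms(2) by (intro mult_left_mono infsum_mono_neutral nonneg_summable_on_complete) auto
  finally show "ennreal ((\<Sum>i\<in>S k. g i) / 2 powr (real k * (\<gamma> + 1)))
      \<le> ennreal (1 / 2 powr (real k * (\<gamma> + 1))) * (\<Sum>\<^sub>\<infinity>i\<in>Dk k a b. ennreal (g i))" .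
qed

lemma psi_dyadic_scale:
  assumes "0 < \<delta>"
  shows "psi \<gamma> p lam (\<delta> / 2 ^ k) \<Delta>
    = (if lam * \<delta> powr (1 + \<gamma> / p) / (2 powr (1 + \<gamma> / p)) ^ k < \<Delta> then 1 else 0)"
proof -
  have "(2 ^ k :: real) powr e = (2 powr e) ^ k" for e
    by (simp add: powr_power powr_powr mult.commute flip: powr_realpow)
  then show ?thesis
    using assms by (simp add: psi_def powr_divide)
qed

lemma DF_ge_increment_exceedances:
  fixes \<alpha> \<beta> :: int
  assumes "0 < \<delta>" "a < ereal (of_int \<alpha>)" "ereal (of_int \<beta>) < b"
  shows "(\<Sum>k. ennreal ((\<Sum>j\<in>{\<alpha> * 2 ^ k..<\<beta> * 2 ^ k}.
          if lam * \<delta> powr (1 + \<gamma> / p) / (2 powr (1 + \<gamma> / p)) ^ k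
             < \<bar>v (of_int (j + 1) / 2 ^ k) - v (of_int j / 2 ^ k)\<bar> then 1 else 0)
        / (2 powr (\<gamma> + 1)) ^ k))
    \<le> DF \<gamma> p lam \<delta> v a b"
  using DF_ge_sum_over_finite_subsets[of "\<lambda>k. {\<alpha> * 2 ^ k..<\<beta> * 2 ^ k}" a b \<gamma> p lam \<delta> v,
      OF _ dyadic_interval_subset_Dk[OF assms(2,3)]]
  by (simp add: psi_dyadic_scale[OF assms(1)] powr_power)

lemma dyadic_exponents:
  fixes \<gamma> p :: real
  assumes "0 < \<gamma>" "1 \<le> p"
  shows "2 < 2 powr (\<gamma> + 1)" "2 \<le> 2 powr (1 + \<gamma> / p)"
    and "(2 powr (1 + \<gamma> / p)) powr p = 2 powr (\<gamma> + 1) * 2 powr (p - 1)"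
proof -
  show "2 < 2 powr (\<gamma> + 1)"
    using powr_less_mono[of 1 "\<gamma> + 1" 2] assms(1) by simp
  show "2 \<le> 2 powr (1 + \<gamma> / p)"
    using powr_mono[of 1 "1 + \<gamma> / p" 2] assms by simp
  have "(1 + \<gamma> / p) * p = (\<gamma> + 1) + (p - 1)"
    using assms(2) by (simp add: field_simps)
  then show "(2 powr (1 + \<gamma> / p)) powr p = 2 powr (\<gamma> + 1) * 2 powr (p - 1)"
    by (simp only: powr_powr powr_add[of 2 "\<gamma> + 1" "p - 1"])
qed

lemma oscillation_le_threshold:
  fixes \<gamma> p \<delta> lam D :: real
  assumes "0 < \<gamma>" "1 \<le> p" "1 / 2 \<le> \<delta>" "0 \<le> D" "2 powr (1 + \<gamma> / p) * D \<le> lam"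
  shows "D \<le> lam * \<delta> powr (1 + \<gamma> / p)"
proof -
  have "1 \<le> (2 * \<delta>) powr (1 + \<gamma> / p)"
    using assms(1-3) by (intro ge_one_powr_ge_zero) auto
  then have "D \<le> (2 * \<delta>) powr (1 + \<gamma> / p) * D"
    using assms(4) by (simp add: mult_le_cancel_right1)
  also have "\<dots> = \<delta> powr (1 + \<gamma> / p) * (2 powr (1 + \<gamma> / p) * D)"
    using assms(3) by (simp add: powr_mult)
  also have "\<dots> \<le> \<delta> powr (1 + \<gamma> / p) * lam"
    using assms(5) by (intro mult_left_mono) auto
  finally show ?thesis
    by (simp add: mult.commute)
qed

lemma threshold_powr:
  fixes \<gamma> p \<delta> lam :: real
  assumes "1 \<le> p" "0 \<le> lam" "0 < \<delta>"
  shows "(lam * \<delta> powr (1 + \<gamma> / p)) powr p = lam powr p * \<delta> powr (p + \<gamma>)"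
proof -
  have "(1 + \<gamma> / p) * p = p + \<gamma>"
    using assms(1) by (simp add: field_simps)
  then show ?thesis
    using assms(2,3) by (simp add: powr_mult powr_powr)
qed

lemma integer_increment_le_oscillation:
  fixes v :: "real \<Rightarrow> real" and \<alpha> \<beta> u :: int
  assumes "\<forall>x \<in> dyadics. a < ereal x \<and> ereal x < b \<longrightarrow> A \<le> v x \<and> v x \<le> B"
    and "a < ereal (of_int \<alpha>)" "ereal (of_int \<beta>) < b" "\<alpha> \<le> u" "u < \<beta>"
  shows "\<bar>v (of_int (u + 1)) - v (of_int u)\<bar> \<le> B - A"
proof -
  have in_range: "A \<le> v (of_int j) \<and> v (of_int j) \<le> B" if "\<alpha> \<le> j" "j \<le> \<beta>" for j
  proof -
    have "a < ereal (of_int j)"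
      by (rule less_le_trans[OF assms(2)]) (simp add: that)
    moreover have "ereal (of_int j) < b"
      by (rule le_less_trans[OF _ assms(3)]) (simp add: that)
    ultimately show ?thesis
      using assms(1) of_int_in_dyadics by blast
  qed
  show ?thesis
    using in_range[of "u + 1"] in_range[of u] assms(4,5) by (auto simp: abs_le_iff)
qed

theorem proposition2p2:
  fixes \<gamma> p A B \<delta> lam :: real and a b :: ereal and v :: "real \<Rightarrow> real"
    and \<alpha> \<beta> :: int
  assumes "\<gamma> > 0" and "p \<ge> 1" and "B \<ge> A"
    and "\<forall>x \<in> dyadics. a < ereal x \<and> ereal x < b \<longrightarrow> A \<le> v x \<and> v x \<le> B"
    and "a < ereal (of_int \<alpha>)" and "\<alpha> < \<beta>" and "ereal (of_int \<beta>) < b"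
    and "v (of_int \<alpha>) = A" and "v (of_int \<beta>) = B"
    and "1/2 \<le> \<delta>" and "\<delta> \<le> 1"
    and "lam \<ge> 2 powr (1 + \<gamma> / p) * (B - A)"
  shows "DF \<gamma> p lam \<delta> v a b \<ge>
    ennreal (1 / (2 powr (\<gamma> + 1) - 1) * (1 / (lam powr p * \<delta> powr (p + \<gamma>)))
             * ((B - A) powr p / (of_int (\<beta> - \<alpha>)) powr (p - 1)))"
proof (cases "B = A")
  case False
  let ?c = "lam * \<delta> powr (1 + \<gamma> / p)"
  have c: "B - A \<le> ?c"
    using assms(1,2,3,10,12) by (intro oscillation_le_threshold) auto
  have "0 \<le> lam"
    using assms(3,12) order_trans[of 0 "2 powr (1 + \<gamma> / p) * (B - A)" lam] by simp
  then have target: "1 / (2 powr (\<gamma> + 1) - 1) * (1 / (lam powr p * \<delta> powr (p + \<gamma>)))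
             * ((B - A) powr p / (of_int (\<beta> - \<alpha>)) powr (p - 1))
    = \<bar>v \<beta> - v \<alpha>\<bar> powr p / ((2 powr (\<gamma> + 1) - 1) * ?c powr p * of_int (\<beta> - \<alpha>) powr (p - 1))"
    using assms(2,3,8,9,10) by (simp add: threshold_powr)
  have "ennreal (\<bar>v \<beta> - v \<alpha>\<bar> powr p
      / ((2 powr (\<gamma> + 1) - 1) * ?c powr p * of_int (\<beta> - \<alpha>) powr (p - 1)))
    \<le> DF \<gamma> p lam \<delta> v a b"
    using assms(3,10) False c
    by (intro order_trans[OF increment_exceedances_ge DF_ge_increment_exceedances[OF _ assms(5,7)]]
        dyadic_exponents[OF assms(1,2)] eq_refl[OF dyadic_exponents(3)[OF assms(1,2), symmetric]]
        assms(2,6) order_trans[OF integer_increment_le_oscillation[OF assms(4,5,7)] c]) auto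
  then show ?thesis
    by (simp only: target)
qed simp

end
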